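(* Let $(\sigma_k)_{k\ge1}$ be a sequence of nonnegative real numbers with mean $\sigma$, i.e. $\lim_{n\to\infty}\frac1n\sum_{k=1}^n\sigma_k=\sigma$. Fix constants $0\le\gamma<\delta<1$. Then \[ \lim_{n\to\infty}\frac1n\sum_{k=\lceil\gamma n\rceil}^{\lfloor\delta n\rfloor}\sigma_k\left(1-\frac kn\right)^{\sigma-1}=(1-\gamma)^\sigma-(1-\delta)^\sigma. \] *)

theory Defs
  imports "HOL-Analysis.Analysis"
begin

end

theory Submission
  imports Defs
begin

(*
  Write T k = s 1 + ... + s k - \<sigma> k, so that T k = o(k) and s k = \<sigma> + (T k - T (k - 1)).
  The \<sigma>-part of the sum is a Riemann sum of \<sigma> (1 - x) powr (\<sigma> - 1), the derivative of
  -(1 - x) powr \<sigma>. This derivative is monotone, so by the mean value theorem the error on each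
  cell is at most 1/n times the oscillation of the integrand over the cell, and these oscillations
  telescope to O(1/n). In the remaining part, summation by parts against the monotone and bounded
  weights (1 - k/n) powr (\<sigma> - 1) bounds the sum by a constant times max over k \<le> n of |T k|,
  which is o(n).
*)

lemma sum_abs_Suc_diff_monotone:
  fixes h :: "nat \<Rightarrow> 'a::linordered_idom"
  assumes "A \<le> B" and "mono_on {A..B} h \<or> antimono_on {A..B} h"
  shows "(\<Sum>k=A..<B. \<bar>h (Suc k) - h k\<bar>) = \<bar>h B - h A\<bar>"
proof -
  have increasing: "(\<Sum>k=A..<B. \<bar>h (Suc k) - h k\<bar>) = \<bar>h B - h A\<bar>"
    if "mono_on {A..B} h" for h :: "nat \<Rightarrow> 'a"
  proof -
    have "(\<Sum>k=A..<B. \<bar>h (Suc k) - h k\<bar>) = (\<Sum>k=A..<B. h (Suc k) - h k)"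
      using that by (intro sum.cong refl) (simp add: mono_onD)
    also have "\<dots> = h B - h A"
      using \<open>A \<le> B\<close> by (rule sum_Suc_diff')
    also have "\<dots> = \<bar>h B - h A\<bar>"
      using that \<open>A \<le> B\<close> by (auto dest: mono_onD)
    finally show ?thesis .
  qed
  have "mono_on {A..B} (\<lambda>k. - h k)" if "antimono_on {A..B} h"
    using that by (auto intro!: monotone_onI dest: monotone_onD)
  then show ?thesis
    using assms(2) increasing[of h] increasing[of "\<lambda>k. - h k"] by (auto simp: abs_minus_commute)
qed

lemma summation_by_parts:
  fixes T g :: "nat \<Rightarrow> 'a::comm_ring"
  assumes "1 \<le> A" "A \<le> B"
  shows "(\<Sum>k=A..B. (T k - T (k - 1)) * g k)
           = T B * g B - T (A - 1) * g A + (\<Sum>k=A..<B. T k * (g k - g (Suc k)))"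
  using assms(2) by (induction B rule: dec_induct) (simp_all add: algebra_simps)

lemma summation_by_parts_bound:
  fixes T g :: "nat \<Rightarrow> real"
  assumes "1 \<le> A" "A \<le> B"
    and T: "\<And>k. A - 1 \<le> k \<Longrightarrow> k \<le> B \<Longrightarrow> \<bar>T k\<bar> \<le> e"
    and g: "mono_on {A..B} g \<or> antimono_on {A..B} g"
  shows "\<bar>\<Sum>k=A..B. (T k - T (k - 1)) * g k\<bar> \<le> 2 * e * (\<bar>g A\<bar> + \<bar>g B\<bar>)"
proof -
  have "\<bar>T B\<bar> \<le> e"
    using T assms(2) by simp
  then have "0 \<le> e"
    by (rule order_trans[OF abs_ge_zero])
  have "\<bar>\<Sum>k=A..<B. T k * (g k - g (Suc k))\<bar> \<le> (\<Sum>k=A..<B. \<bar>T k\<bar> * \<bar>g (Suc k) - g k\<bar>)"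
    by (rule order_trans[OF sum_abs]) (simp add: abs_mult abs_minus_commute)
  also have "\<dots> \<le> (\<Sum>k=A..<B. e * \<bar>g (Suc k) - g k\<bar>)"
    by (intro sum_mono mult_right_mono T) auto
  also have "\<dots> = e * \<bar>g B - g A\<bar>"
    by (simp add: sum_distrib_left[symmetric] sum_abs_Suc_diff_monotone[OF assms(2) g])
  also have "\<dots> \<le> e * (\<bar>g A\<bar> + \<bar>g B\<bar>)"
    using \<open>0 \<le> e\<close> by (intro mult_left_mono) auto
  finally have sum: "\<bar>\<Sum>k=A..<B. T k * (g k - g (Suc k))\<bar> \<le> e * (\<bar>g A\<bar> + \<bar>g B\<bar>)" .
  have ends: "\<bar>T B * g B\<bar> \<le> e * \<bar>g B\<bar>" "\<bar>T (A - 1) * g A\<bar> \<le> e * \<bar>g A\<bar>"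
    unfolding abs_mult using T[of B] T[of "A - 1"] assms(2) by (auto intro: mult_right_mono)
  have "\<bar>\<Sum>k=A..B. (T k - T (k - 1)) * g k\<bar>
          \<le> \<bar>T B * g B\<bar> + \<bar>T (A - 1) * g A\<bar> + \<bar>\<Sum>k=A..<B. T k * (g k - g (Suc k))\<bar>"
    unfolding summation_by_parts[OF assms(1,2)] by linarith
  also have "\<dots> \<le> e * \<bar>g B\<bar> + e * \<bar>g A\<bar> + e * (\<bar>g A\<bar> + \<bar>g B\<bar>)"
    using sum ends by linarith
  also have "\<dots> = 2 * e * (\<bar>g A\<bar> + \<bar>g B\<bar>)"
    by (simp add: algebra_simps)
  finally show ?thesis .
qed

lemma small_o_n_uniform_bound:
  fixes T :: "nat \<Rightarrow> real"
  assumes "(\<lambda>n. T n / real n) \<longlonglongrightarrow> 0" and "0 < \<epsilon>"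
  shows "\<forall>\<^sub>F n in sequentially. \<forall>k\<le>n. \<bar>T k\<bar> \<le> \<epsilon> * real n"
proof -
  have "\<forall>\<^sub>F k in sequentially. \<bar>T k\<bar> \<le> \<epsilon> * real k"
    using order_tendstoD(2)[OF tendsto_rabs[OF assms(1), simplified] \<open>0 < \<epsilon>\<close>] eventually_gt_at_top[of 0]
    by eventually_elim (simp add: abs_div pos_divide_less_eq less_imp_le)
  then obtain N where N: "\<And>k. N \<le> k \<Longrightarrow> \<bar>T k\<bar> \<le> \<epsilon> * real k"
    by (auto simp: eventually_sequentially)
  define C where "C = (\<Sum>k<N. \<bar>T k\<bar>)"
  have "filterlim (\<lambda>n. \<epsilon> * real n) at_top sequentially"
    by (rule filterlim_tendsto_pos_mult_at_top[OF tendsto_const \<open>0 < \<epsilon>\<close> filterlim_real_sequentially])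
  then have "\<forall>\<^sub>F n in sequentially. C \<le> \<epsilon> * real n"
    by (simp add: filterlim_at_top)
  then show ?thesis
  proof eventually_elim
    case (elim n)
    have "\<bar>T k\<bar> \<le> \<epsilon> * real n" if "k \<le> n" for k
    proof (cases "k < N")
      case True
      then have "\<bar>T k\<bar> \<le> C"
        unfolding C_def by (intro member_le_sum) auto
      with elim show ?thesis
        by linarith
    next
      case False
      then have "\<bar>T k\<bar> \<le> \<epsilon> * real k"
        using N by simp
      also have "\<dots> \<le> \<epsilon> * real n"
        using \<open>k \<le> n\<close> \<open>0 < \<epsilon>\<close> by simp
      finally show ?thesis .
    qed
    then show ?case
      by blast
  qed
qed

lemma sum_small_o_increments_tendsto_0:
  fixes T :: "nat \<Rightarrow> real" and g :: "nat \<Rightarrow> nat \<Rightarrow> real" and A B :: "nat \<Rightarrow> nat"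
  assumes T: "(\<lambda>n. T n / real n) \<longlonglongrightarrow> 0"
    and ev: "\<forall>\<^sub>F n in sequentially. 1 \<le> A n \<and> B n \<le> n \<and>
               (mono_on {A n..B n} (g n) \<or> antimono_on {A n..B n} (g n))"
    and bounded: "Bseq (\<lambda>n. g n (A n))" "Bseq (\<lambda>n. g n (B n))"
  shows "(\<lambda>n. (\<Sum>k=A n..B n. (T k - T (k - 1)) * g n k) / real n) \<longlonglongrightarrow> 0"
proof -
  obtain KA KB where "0 < KA" "0 < KB" "\<And>n. \<bar>g n (A n)\<bar> \<le> KA" "\<And>n. \<bar>g n (B n)\<bar> \<le> KB"
    using bounded by (metis BseqE real_norm_def)
  then obtain K where "0 < K" and K: "\<And>n. \<bar>g n (A n)\<bar> + \<bar>g n (B n)\<bar> \<le> K"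
    by (metis add_mono add_pos_pos)
  show ?thesis
    unfolding tendsto_iff dist_real_def
  proof (intro allI impI)
    fix e :: real
    assume "0 < e"
    define \<epsilon> where "\<epsilon> = e / (4 * K)"
    have "0 < \<epsilon>"
      using \<open>0 < e\<close> \<open>0 < K\<close> by (simp add: \<epsilon>_def)
    show "\<forall>\<^sub>F n in sequentially. \<bar>(\<Sum>k=A n..B n. (T k - T (k - 1)) * g n k) / real n - 0\<bar> < e"
      using small_o_n_uniform_bound[OF T \<open>0 < \<epsilon>\<close>] ev eventually_gt_at_top[of 0]
    proof eventually_elim
      case (elim n)
      have "\<bar>\<Sum>k=A n..B n. (T k - T (k - 1)) * g n k\<bar> \<le> 2 * (\<epsilon> * real n) * K"
      proof (cases "A n \<le> B n")
        case True
        have "\<bar>\<Sum>k=A n..B n. (T k - T (k - 1)) * g n k\<bar>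
                \<le> 2 * (\<epsilon> * real n) * (\<bar>g n (A n)\<bar> + \<bar>g n (B n)\<bar>)"
          using elim True by (intro summation_by_parts_bound) auto
        also have "\<dots> \<le> 2 * (\<epsilon> * real n) * K"
          using K \<open>0 < \<epsilon>\<close> by (intro mult_left_mono) auto
        finally show ?thesis .
      qed (use \<open>0 < \<epsilon>\<close> \<open>0 < K\<close> in simp)
      also have "\<dots> = e / 2 * real n"
        using \<open>0 < K\<close> by (simp add: \<epsilon>_def)
      finally have "\<bar>\<Sum>k=A n..B n. (T k - T (k - 1)) * g n k\<bar> \<le> e / 2 * real n" .
      moreover have "0 < e * real n"
        using \<open>0 < n\<close> \<open>0 < e\<close> by simp
      ultimately have "\<bar>\<Sum>k=A n..B n. (T k - T (k - 1)) * g n k\<bar> < e * real n"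
        by linarith
      then show ?case
        using \<open>0 < n\<close> by (simp add: abs_div divide_less_eq)
    qed
  qed
qed

lemma MVT_monotone_deriv_bound:
  fixes f f' :: "real \<Rightarrow> real"
  assumes "a < b"
    and deriv: "\<And>x. a \<le> x \<Longrightarrow> x \<le> b \<Longrightarrow> (f has_real_derivative f' x) (at x)"
    and mono: "mono_on {a..b} f' \<or> antimono_on {a..b} f'"
  shows "\<bar>f b - f a - (b - a) * f' a\<bar> \<le> (b - a) * \<bar>f' b - f' a\<bar>"
proof -
  obtain z where z: "a < z" "z < b" "f b - f a = (b - a) * f' z"
    using MVT2[OF \<open>a < b\<close> deriv] by blast
  have "\<bar>f' z - f' a\<bar> \<le> \<bar>f' b - f' a\<bar>"
  proof -
    have "a \<in> {a..b}" "z \<in> {a..b}" "b \<in> {a..b}"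
      using z by auto
    then have "f' a \<le> f' z \<and> f' z \<le> f' b \<or> f' z \<le> f' a \<and> f' b \<le> f' z"
      using mono z monotone_onD[of "{a..b}" "(\<le>)" _ f'] by force
    then show ?thesis
      by linarith
  qed
  moreover have "f b - f a - (b - a) * f' a = (b - a) * (f' z - f' a)"
    using z(3) by (simp add: algebra_simps)
  ultimately show ?thesis
    using \<open>a < b\<close> by (simp add: abs_mult mult_left_mono)
qed

lemma monotone_on_grid:
  fixes g :: "real \<Rightarrow> real"
  assumes "mono_on I g \<or> antimono_on I g"
    and "\<And>k. A \<le> k \<Longrightarrow> k \<le> B \<Longrightarrow> real k / real n \<in> I"
  shows "mono_on {A..B} (\<lambda>k. g (real k / real n)) \<or> antimono_on {A..B} (\<lambda>k. g (real k / real n))"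
proof -
  have grid: "mono_on {A..B} (\<lambda>k. real k / real n)"
    by (intro monotone_onI divide_right_mono) auto
  have "(\<lambda>k. real k / real n) ` {A..B} \<subseteq> I"
    using assms(2) by auto
  then show ?thesis
    using assms(1) monotone_on_o[OF _ grid, of I _ g] by (auto simp: o_def)
qed

lemma Riemann_sum_deriv_error:
  fixes f f' :: "real \<Rightarrow> real" and n A B :: nat
  defines "x \<equiv> \<lambda>k. real k / real n"
  assumes "0 < n" "A \<le> B"
    and deriv: "\<And>t. x A \<le> t \<Longrightarrow> t \<le> x (Suc B) \<Longrightarrow> (f has_real_derivative f' t) (at t)"
    and mono: "mono_on {x A..x (Suc B)} f' \<or> antimono_on {x A..x (Suc B)} f'"
  shows "\<bar>(\<Sum>k=A..B. f' (x k)) / real n - (f (x (Suc B)) - f (x A))\<bar>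
           \<le> \<bar>f' (x (Suc B)) - f' (x A)\<bar> / real n"
proof -
  have x_le: "x j \<le> x k" if "j \<le> k" for j k
    unfolding x_def using that by (intro divide_right_mono) auto
  have step: "\<bar>f' (x k) / real n - (f (x (Suc k)) - f (x k))\<bar> \<le> \<bar>f' (x (Suc k)) - f' (x k)\<bar> / real n"
    if "A \<le> k" "k \<le> B" for k
  proof -
    have width: "x (Suc k) - x k = 1 / real n"
      unfolding x_def by (simp add: diff_divide_distrib[symmetric])
    have "x k < x (Suc k)"
      unfolding x_def using \<open>0 < n\<close> by (simp add: divide_strict_right_mono)
    moreover have "{x k..x (Suc k)} \<subseteq> {x A..x (Suc B)}"
      using that x_le by auto
    ultimately show ?thesis
      using MVT_monotone_deriv_bound[of "x k" "x (Suc k)" f f'] deriv mono monotone_on_subset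
      unfolding width by (fastforce simp: abs_minus_commute)
  qed
  have "f (x (Suc B)) - f (x A) = (\<Sum>k=A..B. f (x (Suc k)) - f (x k))"
    using sum_Suc_diff'[of A "Suc B" "\<lambda>k. f (x k)"] \<open>A \<le> B\<close> by (simp add: atLeastLessThanSuc_atLeastAtMost)
  then have "\<bar>(\<Sum>k=A..B. f' (x k)) / real n - (f (x (Suc B)) - f (x A))\<bar>
               \<le> (\<Sum>k=A..B. \<bar>f' (x k) / real n - (f (x (Suc k)) - f (x k))\<bar>)"
    by (simp add: sum_divide_distrib sum_subtractf[symmetric])
  also have "\<dots> \<le> (\<Sum>k=A..<Suc B. \<bar>f' (x (Suc k)) - f' (x k)\<bar>) / real n"
    using step by (auto simp: sum_divide_distrib atLeastLessThanSuc_atLeastAtMost intro!: sum_mono)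
  also have "(\<Sum>k=A..<Suc B. \<bar>f' (x (Suc k)) - f' (x k)\<bar>) = \<bar>f' (x (Suc B)) - f' (x A)\<bar>"
  proof (rule sum_abs_Suc_diff_monotone)
    show "mono_on {A..Suc B} (\<lambda>k. f' (x k)) \<or> antimono_on {A..Suc B} (\<lambda>k. f' (x k))"
      unfolding x_def by (rule monotone_on_grid[OF mono]) (auto simp: x_def intro!: divide_right_mono)
  qed (use \<open>A \<le> B\<close> in simp)
  finally show ?thesis .
qed

lemma Riemann_sum_deriv_error_tendsto_0:
  fixes f f' :: "real \<Rightarrow> real" and A B :: "nat \<Rightarrow> nat"
  assumes "a < \<gamma>" "\<gamma> < \<delta>" "\<delta> < b"
    and deriv: "\<And>t. a < t \<Longrightarrow> t < b \<Longrightarrow> (f has_real_derivative f' t) (at t)"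
    and mono: "mono_on {a<..<b} f' \<or> antimono_on {a<..<b} f'"
    and cont: "isCont f' \<gamma>" "isCont f' \<delta>"
    and lim_A: "(\<lambda>n. real (A n) / real n) \<longlonglongrightarrow> \<gamma>"
    and lim_B: "(\<lambda>n. real (Suc (B n)) / real n) \<longlonglongrightarrow> \<delta>"
  shows "(\<lambda>n. (\<Sum>k=A n..B n. f' (real k / real n)) / real n
             - (f (real (Suc (B n)) / real n) - f (real (A n) / real n))) \<longlonglongrightarrow> 0"
proof -
  define x where "x = (\<lambda>n k. real k / real n)"
  have mid: "\<gamma> < (\<gamma> + \<delta>) / 2" "(\<gamma> + \<delta>) / 2 < \<delta>"
    using \<open>\<gamma> < \<delta>\<close> by auto
  have "\<forall>\<^sub>F n in sequentially. a < x n (A n) \<and> x n (A n) < x n (Suc (B n)) \<and> x n (Suc (B n)) < b"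
    using order_tendstoD(1)[OF lim_A \<open>a < \<gamma>\<close>] order_tendstoD(2)[OF lim_B \<open>\<delta> < b\<close>]
      order_tendstoD(2)[OF lim_A mid(1)] order_tendstoD(1)[OF lim_B mid(2)]
    unfolding x_def by eventually_elim (blast intro: less_trans)
  then have "\<forall>\<^sub>F n in sequentially.
      norm ((\<Sum>k=A n..B n. f' (x n k)) / real n - (f (x n (Suc (B n))) - f (x n (A n))))
        \<le> \<bar>f' (x n (Suc (B n))) - f' (x n (A n))\<bar> / real n"
    using eventually_gt_at_top[of 0]
  proof eventually_elim
    case (elim n)
    then have "real (A n) < real (Suc (B n))"
      by (simp add: x_def divide_less_cancel)
    then have "A n \<le> B n"
      by simp
    have sub: "{x n (A n)..x n (Suc (B n))} \<subseteq> {a<..<b}"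
      using elim by auto
    have "\<And>t. x n (A n) \<le> t \<Longrightarrow> t \<le> x n (Suc (B n)) \<Longrightarrow> (f has_real_derivative f' t) (at t)"
      using deriv sub by auto
    moreover have "mono_on {x n (A n)..x n (Suc (B n))} f' \<or> antimono_on {x n (A n)..x n (Suc (B n))} f'"
      using mono monotone_on_subset[OF _ sub] by blast
    ultimately show ?case
      using Riemann_sum_deriv_error[OF \<open>0 < n\<close> \<open>A n \<le> B n\<close>, of f f'] unfolding x_def by simp
  qed
  moreover have "(\<lambda>n. \<bar>f' (x n (Suc (B n))) - f' (x n (A n))\<bar> / real n) \<longlonglongrightarrow> 0"
  proof -
    have "(\<lambda>n. \<bar>f' (x n (Suc (B n))) - f' (x n (A n))\<bar>) \<longlonglongrightarrow> \<bar>f' \<delta> - f' \<gamma>\<bar>"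
      unfolding x_def
      by (intro tendsto_rabs tendsto_diff isCont_tendsto_compose[OF cont(2) lim_B]
          isCont_tendsto_compose[OF cont(1) lim_A])
    then show ?thesis
      by (rule tendsto_divide_0[OF _ filterlim_at_top_imp_at_infinity[OF filterlim_real_sequentially]])
  qed
  ultimately show ?thesis
    unfolding x_def by (rule Lim_null_comparison)
qed

lemma Riemann_sum_tendsto:
  fixes f f' :: "real \<Rightarrow> real" and A B :: "nat \<Rightarrow> nat"
  assumes "a < \<gamma>" "\<gamma> < \<delta>" "\<delta> < b"
    and deriv: "\<And>t. a < t \<Longrightarrow> t < b \<Longrightarrow> (f has_real_derivative f' t) (at t)"
    and mono: "mono_on {a<..<b} f' \<or> antimono_on {a<..<b} f'"
    and cont: "isCont f' \<gamma>" "isCont f' \<delta>"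
    and lim_A: "(\<lambda>n. real (A n) / real n) \<longlonglongrightarrow> \<gamma>"
    and lim_B: "(\<lambda>n. real (Suc (B n)) / real n) \<longlonglongrightarrow> \<delta>"
  shows "(\<lambda>n. (\<Sum>k=A n..B n. f' (real k / real n)) / real n) \<longlonglongrightarrow> f \<delta> - f \<gamma>"
proof -
  have "isCont f t" if "a < t" "t < b" for t
    using deriv[OF that] by (rule DERIV_isCont)
  then have "isCont f \<gamma>" "isCont f \<delta>"
    using assms(1-3) by auto
  then have "(\<lambda>n. f (real (Suc (B n)) / real n) - f (real (A n) / real n)) \<longlonglongrightarrow> f \<delta> - f \<gamma>"
    by (intro tendsto_diff isCont_tendsto_compose[OF _ lim_B] isCont_tendsto_compose[OF _ lim_A])
  from tendsto_add[OF Riemann_sum_deriv_error_tendsto_0[OF assms] this] show ?thesis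
    by simp
qed

lemma has_real_derivative_neg_one_minus_powr:
  fixes x p :: real
  assumes "x < 1"
  shows "((\<lambda>x. - ((1 - x) powr p)) has_real_derivative p * (1 - x) powr (p - 1)) (at x)"
  using assms by (auto intro!: derivative_eq_intros)

lemma one_minus_powr_monotone:
  fixes c p :: real
  shows "mono_on {..<1} (\<lambda>x. c * (1 - x) powr p) \<or> antimono_on {..<1} (\<lambda>x. c * (1 - x) powr p)"
proof -
  have powr_le: "(1 - y) powr p \<le> (1 - x) powr p" if "0 \<le> p" "x \<le> y" "y < 1" for x y :: real
    using that by (intro powr_mono2) auto
  have powr_ge: "(1 - x) powr p \<le> (1 - y) powr p" if "p \<le> 0" "x \<le> y" "y < 1" for x y :: real
    using that by (intro powr_mono2') auto
  consider "0 \<le> c" "0 \<le> p" | "0 \<le> c" "p \<le> 0" | "c \<le> 0" "0 \<le> p" | "c \<le> 0" "p \<le> 0"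
    by linarith
  then show ?thesis
  proof cases
    case 1
    then show ?thesis
      by (intro disjI2 monotone_onI) (auto intro: mult_left_mono powr_le)
  next
    case 2
    then show ?thesis
      by (intro disjI1 monotone_onI) (auto intro: mult_left_mono powr_ge)
  next
    case 3
    then show ?thesis
      by (intro disjI1 monotone_onI) (auto intro: mult_left_mono_neg powr_le)
  next
    case 4
    then show ?thesis
      by (intro disjI2 monotone_onI) (auto intro: mult_left_mono_neg powr_ge)
  qed
qed

lemma Collect_ceiling_floor_eq_atLeastAtMost:
  "{k. 1 \<le> k \<and> \<lceil>x\<rceil> \<le> int k \<and> int k \<le> \<lfloor>y\<rfloor>} = {max 1 (nat \<lceil>x\<rceil>)..nat \<lfloor>y\<rfloor>}"
  by (auto simp: nat_le_iff le_nat_iff)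

lemma tendsto_divide_real_of_bounded_offset:
  fixes a :: "nat \<Rightarrow> real"
  assumes "\<And>n. \<bar>a n - c * real n\<bar> \<le> K"
  shows "(\<lambda>n. a n / real n) \<longlonglongrightarrow> c"
proof -
  have "(\<lambda>n. (a n - c * real n) / real n) \<longlonglongrightarrow> 0"
    by (rule Lim_null_comparison[OF _ lim_const_over_n[of K]])
       (use assms in \<open>auto simp: abs_div divide_right_mono\<close>)
  then have "(\<lambda>n. (a n - c * real n) / real n + c) \<longlonglongrightarrow> 0 + c"
    by (intro tendsto_add tendsto_const)
  moreover have "\<forall>\<^sub>F n in sequentially. (a n - c * real n) / real n + c = a n / real n"
    using eventually_gt_at_top[of 0] by eventually_elim (simp add: field_simps)
  ultimately show ?thesis
    by (simp add: tendsto_cong)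
qed

lemma tendsto_nat_ceiling_divide:
  fixes c :: real
  assumes "0 \<le> c"
  shows "(\<lambda>n. real (max 1 (nat \<lceil>c * real n\<rceil>)) / real n) \<longlonglongrightarrow> c"
proof (rule tendsto_divide_real_of_bounded_offset)
  fix n
  have "0 \<le> c * real n"
    using assms by simp
  then have "real (max 1 (nat \<lceil>c * real n\<rceil>)) = max 1 (of_int \<lceil>c * real n\<rceil>)"
    by (simp add: of_nat_max)
  then show "\<bar>real (max 1 (nat \<lceil>c * real n\<rceil>)) - c * real n\<bar> \<le> 1"
    using \<open>0 \<le> c * real n\<close> ceiling_correct[of "c * real n"] by (simp add: max_def)
qed

lemma tendsto_nat_floor_divide:
  fixes c :: real
  assumes "0 \<le> c"
  shows "(\<lambda>n. real (nat \<lfloor>c * real n\<rfloor>) / real n) \<longlonglongrightarrow> c"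
    and "(\<lambda>n. real (Suc (nat \<lfloor>c * real n\<rfloor>)) / real n) \<longlonglongrightarrow> c"
proof -
  have "real (nat \<lfloor>c * real n\<rfloor>) = of_int \<lfloor>c * real n\<rfloor>" for n
    using assms by simp
  then have floor: "\<bar>real (nat \<lfloor>c * real n\<rfloor>) - c * real n\<bar> \<le> 1"
    and floor_Suc: "\<bar>real (Suc (nat \<lfloor>c * real n\<rfloor>)) - c * real n\<bar> \<le> 1" for n
    using floor_correct[of "c * real n"] by (simp_all only: of_nat_Suc abs_le_iff) linarith+
  show "(\<lambda>n. real (nat \<lfloor>c * real n\<rfloor>) / real n) \<longlonglongrightarrow> c"
    using floor by (rule tendsto_divide_real_of_bounded_offset)
  show "(\<lambda>n. real (Suc (nat \<lfloor>c * real n\<rfloor>)) / real n) \<longlonglongrightarrow> c"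
    using floor_Suc by (rule tendsto_divide_real_of_bounded_offset)
qed

lemma Riemann_sum_one_minus_powr_tendsto:
  fixes \<sigma> \<gamma> \<delta> :: real and A B :: "nat \<Rightarrow> nat"
  assumes "0 \<le> \<gamma>" "\<gamma> < \<delta>" "\<delta> < 1"
    and lim_A: "(\<lambda>n. real (A n) / real n) \<longlonglongrightarrow> \<gamma>"
    and lim_B: "(\<lambda>n. real (Suc (B n)) / real n) \<longlonglongrightarrow> \<delta>"
  shows "(\<lambda>n. (\<Sum>k=A n..B n. \<sigma> * (1 - real k / real n) powr (\<sigma> - 1)) / real n)
           \<longlonglongrightarrow> (1 - \<gamma>) powr \<sigma> - (1 - \<delta>) powr \<sigma>"
proof -
  have "{-1<..<1} \<subseteq> {..<1::real}"
    by auto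
  then have "mono_on {-1<..<1} (\<lambda>x. \<sigma> * (1 - x) powr (\<sigma> - 1)) \<or>
             antimono_on {-1<..<1} (\<lambda>x. \<sigma> * (1 - x) powr (\<sigma> - 1))"
    using one_minus_powr_monotone[of \<sigma> "\<sigma> - 1"] monotone_on_subset by blast
  moreover have "isCont (\<lambda>x. \<sigma> * (1 - x) powr (\<sigma> - 1)) x" if "x < 1" for x
    using that by (intro continuous_intros) auto
  ultimately show ?thesis
    using Riemann_sum_tendsto[of "-1" \<gamma> \<delta> 1 "\<lambda>x. - ((1 - x) powr \<sigma>)"
        "\<lambda>x. \<sigma> * (1 - x) powr (\<sigma> - 1)" A B]
      has_real_derivative_neg_one_minus_powr assms by simp
qed

lemma sum_small_o_increments_one_minus_powr_tendsto_0:
  fixes T :: "nat \<Rightarrow> real" and A B :: "nat \<Rightarrow> nat" and p \<gamma> \<delta> :: real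
  assumes T: "(\<lambda>n. T n / real n) \<longlonglongrightarrow> 0"
    and "\<gamma> < 1" "0 \<le> \<delta>" "\<delta> < 1"
    and A: "\<And>n. 1 \<le> A n" and B: "\<And>n. real (B n) \<le> \<delta> * real n"
    and lim_A: "(\<lambda>n. real (A n) / real n) \<longlonglongrightarrow> \<gamma>"
    and lim_B: "(\<lambda>n. real (B n) / real n) \<longlonglongrightarrow> \<delta>"
  shows "(\<lambda>n. (\<Sum>k=A n..B n. (T k - T (k - 1)) * (1 - real k / real n) powr p) / real n) \<longlonglongrightarrow> 0"
proof (rule sum_small_o_increments_tendsto_0[OF T])
  have "B n \<le> n" for n
  proof -
    have "\<delta> * real n \<le> real n"
      using assms(3,4) by (intro mult_left_le_one_le) auto
    then show ?thesis
      using B[of n] by linarith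
  qed
  moreover have "real k / real n \<in> {..<1}" if "k \<le> B n" for k n
  proof (cases "n = 0")
    case False
    have "real k \<le> \<delta> * real n"
      using that B[of n] by linarith
    then have "real k / real n \<le> \<delta>"
      using False by (simp add: divide_le_eq)
    then show ?thesis
      using \<open>\<delta> < 1\<close> by simp
  qed simp
  then have "mono_on {A n..B n} (\<lambda>k. (1 - real k / real n) powr p) \<or>
             antimono_on {A n..B n} (\<lambda>k. (1 - real k / real n) powr p)" for n
    using monotone_on_grid[OF one_minus_powr_monotone[of 1 p]] by simp
  ultimately show "\<forall>\<^sub>F n in sequentially. 1 \<le> A n \<and> B n \<le> n \<and>
      (mono_on {A n..B n} (\<lambda>k. (1 - real k / real n) powr p) \<or>
       antimono_on {A n..B n} (\<lambda>k. (1 - real k / real n) powr p))"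
    using A by simp
  have "isCont (\<lambda>x. (1 - x) powr p) x" if "x < 1" for x
    using that by (intro continuous_intros) auto
  then have "(\<lambda>n. (1 - real (A n) / real n) powr p) \<longlonglongrightarrow> (1 - \<gamma>) powr p"
    and "(\<lambda>n. (1 - real (B n) / real n) powr p) \<longlonglongrightarrow> (1 - \<delta>) powr p"
    using assms(2,4) by (auto intro!: isCont_tendsto_compose[OF _ lim_A] isCont_tendsto_compose[OF _ lim_B])
  then show "Bseq (\<lambda>n. (1 - real (A n) / real n) powr p)" "Bseq (\<lambda>n. (1 - real (B n) / real n) powr p)"
    by (blast intro: convergent_imp_Bseq convergentI)+
qed

lemma centred_partial_sums:
  fixes s T :: "nat \<Rightarrow> real"
  assumes T: "\<And>k. T k = (\<Sum>j=1..k. s j) - \<sigma> * real k"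
    and mean: "(\<lambda>n. (\<Sum>k=1..n. s k) / real n) \<longlonglongrightarrow> \<sigma>"
  shows "(\<lambda>n. T n / real n) \<longlonglongrightarrow> 0"
    and "1 \<le> k \<Longrightarrow> s k = \<sigma> + (T k - T (k - 1))"
proof -
  have "(\<lambda>n. (\<Sum>k=1..n. s k) / real n - \<sigma>) \<longlonglongrightarrow> 0"
    using tendsto_diff[OF mean tendsto_const[of \<sigma>]] by simp
  moreover have "\<forall>\<^sub>F n in sequentially. (\<Sum>k=1..n. s k) / real n - \<sigma> = T n / real n"
    using eventually_gt_at_top[of 0] by eventually_elim (simp add: T field_simps)
  ultimately show "(\<lambda>n. T n / real n) \<longlonglongrightarrow> 0"
    by (rule Lim_transform_eventually)
  show "1 \<le> k \<Longrightarrow> s k = \<sigma> + (T k - T (k - 1))"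
    by (cases k) (simp_all add: T algebra_simps)
qed

theorem lemma2p8:
  fixes s :: "nat \<Rightarrow> real" and \<sigma> \<gamma> \<delta> :: real
  assumes nonneg: "\<And>k. k \<ge> 1 \<Longrightarrow> s k \<ge> 0"
    and mean: "(\<lambda>n. (\<Sum>k=1..n. s k) / real n) \<longlonglongrightarrow> \<sigma>"
    and "0 \<le> \<gamma>" and "\<gamma> < \<delta>" and "\<delta> < 1"
  shows "(\<lambda>n. (\<Sum>k\<in>{k. 1 \<le> k \<and> \<lceil>\<gamma> * real n\<rceil> \<le> int k \<and> int k \<le> \<lfloor>\<delta> * real n\<rfloor>}.
              s k * (1 - real k / real n) powr (\<sigma> - 1)) / real n)
         \<longlonglongrightarrow> (1 - \<gamma>) powr \<sigma> - (1 - \<delta>) powr \<sigma>"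
proof -
  define A where "A n = max 1 (nat \<lceil>\<gamma> * real n\<rceil>)" for n
  define B where "B n = nat \<lfloor>\<delta> * real n\<rfloor>" for n
  define T where "T k = (\<Sum>j=1..k. s j) - \<sigma> * real k" for k
  have lim_A: "(\<lambda>n. real (A n) / real n) \<longlonglongrightarrow> \<gamma>"
    unfolding A_def using \<open>0 \<le> \<gamma>\<close> by (rule tendsto_nat_ceiling_divide)
  have "0 \<le> \<delta>"
    using assms(3,4) by simp
  then have lim_B: "(\<lambda>n. real (B n) / real n) \<longlonglongrightarrow> \<delta>"
    and lim_Suc_B: "(\<lambda>n. real (Suc (B n)) / real n) \<longlonglongrightarrow> \<delta>"
    unfolding B_def by (rule tendsto_nat_floor_divide)+
  have B_le: "real (B n) \<le> \<delta> * real n" for n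
    using \<open>0 \<le> \<delta>\<close> of_int_floor_le[of "\<delta> * real n"] by (simp add: B_def)
  have index_set:
    "{k. 1 \<le> k \<and> \<lceil>\<gamma> * real n\<rceil> \<le> int k \<and> int k \<le> \<lfloor>\<delta> * real n\<rfloor>} = {A n..B n}" for n
    unfolding A_def B_def by (rule Collect_ceiling_floor_eq_atLeastAtMost)
  have split: "(\<Sum>k\<in>{k. 1 \<le> k \<and> \<lceil>\<gamma> * real n\<rceil> \<le> int k \<and> int k \<le> \<lfloor>\<delta> * real n\<rfloor>}.
                  s k * (1 - real k / real n) powr (\<sigma> - 1)) / real n
        = (\<Sum>k=A n..B n. \<sigma> * (1 - real k / real n) powr (\<sigma> - 1)) / real n
          + (\<Sum>k=A n..B n. (T k - T (k - 1)) * (1 - real k / real n) powr (\<sigma> - 1)) / real n" for n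
    unfolding index_set
    by (auto simp: centred_partial_sums(2)[OF T_def mean] A_def distrib_right sum.distrib
        add_divide_distrib intro!: arg_cong2[where f = "(/)"] sum.cong)
  show ?thesis
    unfolding split
    using tendsto_add[OF Riemann_sum_one_minus_powr_tendsto[OF assms(3-5) lim_A lim_Suc_B]
        sum_small_o_increments_one_minus_powr_tendsto_0[OF centred_partial_sums(1)[OF T_def mean]
          _ \<open>0 \<le> \<delta>\<close> \<open>\<delta> < 1\<close> _ B_le lim_A lim_B]] assms
    by (simp add: A_def)
qed

end
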